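(* Fix $\alpha\in\mathbb{R}\setminus\{0,1\}$ and let $F$ be the (weighted) generalized entropy index of parameter $\alpha$ defined in the context, with $q(\mu)=\mu^\alpha$. Let $n\ge 1$, let $K\in\mathbb{R}_{\ge 0}^{n\times n}$ be column-normalized, i.e. $\sum_{i=1}^n K_{ij}=1$ for every $j$, and assume every row of $K$ has positive sum, i.e. $K_i^\top\vec 1>0$ for all $i$, where $K_i$ denotes the $i$-th row of $K$. Then for every $\vec y\in\mathbb{R}_{>0}^n$, with $\mu=\frac1n\sum_{i=1}^n y_i$, $$F(\vec y)=\sum_{i=1}^n \frac{q\big(A(K,\vec y)_i\big)\,K_i^\top\vec 1}{q(\mu)\,n}\,F(\vec y,K_i)\;+\;F\big(A(K,\vec y),K\vec 1\big).$$
   Context: For $x\in\mathbb{R}_{>0}^n$ and a weight vector $w\in\mathbb{R}_{\ge0}^n$ with $\|w\|_1>0$, the weighted mean is $\mu_w=\sum_i w_i x_i/\|w\|_1$, and the weighted generalized entropy of parameter $\alpha\notin\{0,1\}$ is $F(x,w)=\frac{1}{\alpha(\alpha-1)}\sum_{i=1}^n\frac{w_i}{\|w\|_1}\big((x_i/\mu_w)^\alpha-1\big)$. The unweighted index is $F(x)=F(x,\vec 1)=\frac{1}{n\alpha(\alpha-1)}\sum_{i=1}^n\big((x_i/\mu)^\alpha-1\big)$ with $\mu=\frac1n\sum_i x_i$. For a nonnegative matrix $K$ with positive row sums and $\vec y\in\mathbb{R}^n$, the averaging operator is $A(K,\vec y)=\frac{K\vec y}{K\vec 1}$, with division taken entrywise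 and $\vec 1$ the all-ones vector (so $A(K,\vec y)_i$ is the average of $\vec y$ weighted by row $i$ of $K$). *)

theory Defs
  imports Complex_Main
begin

text \<open>Vectors in R^n are represented as functions nat => real, only indices i < n matter.
  Matrices as nat => nat => real, K i j is the entry in row i, column j.\<close>

definition l1norm :: "nat \<Rightarrow> (nat \<Rightarrow> real) \<Rightarrow> real" where
  "l1norm n w = (\<Sum>i<n. \<bar>w i\<bar>)"

definition wmean :: "nat \<Rightarrow> (nat \<Rightarrow> real) \<Rightarrow> (nat \<Rightarrow> real) \<Rightarrow> real" where
  "wmean n x w = (\<Sum>i<n. w i * x i) / l1norm n w"

definition GE :: "real \<Rightarrow> nat \<Rightarrow> (nat \<Rightarrow> real) \<Rightarrow> (nat \<Rightarrow> real) \<Rightarrow> real" where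
  "GE \<alpha> n x w = 1 / (\<alpha> * (\<alpha> - 1)) *
     (\<Sum>i<n. w i / l1norm n w * ((x i / wmean n x w) powr \<alpha> - 1))"

definition GE1 :: "real \<Rightarrow> nat \<Rightarrow> (nat \<Rightarrow> real) \<Rightarrow> real" where
  "GE1 \<alpha> n x = GE \<alpha> n x (\<lambda>_. 1)"

definition rowsum :: "nat \<Rightarrow> (nat \<Rightarrow> nat \<Rightarrow> real) \<Rightarrow> nat \<Rightarrow> real" where
  "rowsum n K i = (\<Sum>j<n. K i j)"

definition avg_op :: "nat \<Rightarrow> (nat \<Rightarrow> nat \<Rightarrow> real) \<Rightarrow> (nat \<Rightarrow> real) \<Rightarrow> nat \<Rightarrow> real" where
  "avg_op n K y i = (\<Sum>j<n. K i j * y j) / rowsum n K i"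

end

theory Submission
  imports Defs
begin

text \<open>For positive data every index \<open>F(x,w)\<close> equals \<open>(\<Sum>\<^sub>i w\<^sub>i x\<^sub>i\<^sup>\<alpha> / (\<parallel>w\<parallel>\<^sub>1 \<mu>\<^sub>w\<^sup>\<alpha>) - 1) / (\<alpha>(\<alpha>-1))\<close>. The row terms then combine to
  \<open>(\<Sum>\<^sub>j y\<^sub>j\<^sup>\<alpha> - \<Sum>\<^sub>i (K\<^sub>i\<^sup>T1) A\<^sub>i\<^sup>\<alpha>) / (n \<mu>\<^sup>\<alpha> \<alpha>(\<alpha>-1))\<close>, because the columns of \<open>K\<close> sum to one.
  The between-group term \<open>F(A, K1)\<close> has weights of total mass \<open>n\<close> and weighted mean \<open>\<mu>\<close>, so it
  contributes exactly the missing \<open>\<Sum>\<^sub>i (K\<^sub>i\<^sup>T1) A\<^sub>i\<^sup>\<alpha>\<close>.\<close>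

lemma l1norm_eq_sum_nonneg: "(\<And>i. i < n \<Longrightarrow> w i \<ge> 0) \<Longrightarrow> l1norm n w = (\<Sum>i<n. w i)"
  unfolding l1norm_def by (intro sum.cong) auto

lemma wmean_nonneg:
  assumes "\<And>i. i < n \<Longrightarrow> w i \<ge> 0" and "\<And>i. i < n \<Longrightarrow> x i \<ge> 0"
  shows "wmean n x w \<ge> 0"
  unfolding wmean_def l1norm_def using assms by (intro divide_nonneg_nonneg sum_nonneg) auto

lemma GE_closed_form:
  assumes w: "\<And>i. i < n \<Longrightarrow> w i \<ge> 0" and x: "\<And>i. i < n \<Longrightarrow> x i > 0"
    and l1: "l1norm n w \<noteq> 0"
  shows "GE \<alpha> n x w =
    ((\<Sum>i<n. w i * x i powr \<alpha>) / (l1norm n w * wmean n x w powr \<alpha>) - 1) / (\<alpha> * (\<alpha> - 1))"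
proof -
  define m where "m = wmean n x w"
  have m: "m \<ge> 0" unfolding m_def using w x by (intro wmean_nonneg) (auto simp: less_imp_le)
  have "(\<Sum>i<n. w i / l1norm n w * ((x i / m) powr \<alpha> - 1))
      = (\<Sum>i<n. w i * x i powr \<alpha> / (l1norm n w * m powr \<alpha>) - w i / l1norm n w)"
    using x m by (intro sum.cong) (auto simp: powr_divide less_imp_le algebra_simps)
  also have "\<dots> = (\<Sum>i<n. w i * x i powr \<alpha>) / (l1norm n w * m powr \<alpha>) - 1"
    using l1 w by (simp add: sum_subtractf sum_divide_distrib[symmetric] l1norm_eq_sum_nonneg)
  finally show ?thesis unfolding GE_def m_def by simp
qed

lemma sum_column_stochastic:
  fixes K :: "nat \<Rightarrow> nat \<Rightarrow> real"
  assumes "\<And>j. j < n \<Longrightarrow> (\<Sum>i<n. K i j) = 1"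
  shows "(\<Sum>i<n. \<Sum>j<n. K i j * f j) = (\<Sum>j<n. f j)"
proof -
  have "(\<Sum>i<n. \<Sum>j<n. K i j * f j) = (\<Sum>j<n. \<Sum>i<n. K i j * f j)"
    by (rule sum.swap)
  also have "\<dots> = (\<Sum>j<n. (\<Sum>i<n. K i j) * f j)"
    unfolding sum_distrib_right ..
  also have "\<dots> = (\<Sum>j<n. f j)" using assms by simp
  finally show ?thesis .
qed

lemma sum_rowsum_column_stochastic:
  "(\<And>j. j < n \<Longrightarrow> (\<Sum>i<n. K i j) = 1) \<Longrightarrow> (\<Sum>i<n. rowsum n K i) = real n"
  using sum_column_stochastic[of n K "\<lambda>_. 1"] by (simp add: rowsum_def)

lemma avg_op_pos:
  assumes K: "\<And>j. j < n \<Longrightarrow> K i j \<ge> 0" and r: "rowsum n K i > 0"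
    and y: "\<And>j. j < n \<Longrightarrow> y j > 0"
  shows "avg_op n K y i > 0"
proof -
  obtain j where j: "j < n" "K i j > 0"
    using r K unfolding rowsum_def by (metis less_le lessThan_iff not_less sum_nonpos)
  have "0 < K i j * y j" using j y by simp
  also have "\<dots> \<le> (\<Sum>j<n. K i j * y j)"
    using j K y by (intro member_le_sum) (auto simp: less_imp_le)
  finally show ?thesis unfolding avg_op_def using r by simp
qed

lemma wmean_row_eq_avg_op:
  "(\<And>j. j < n \<Longrightarrow> K i j \<ge> 0) \<Longrightarrow> wmean n y (K i) = avg_op n K y i"
  unfolding wmean_def avg_op_def by (simp add: l1norm_eq_sum_nonneg rowsum_def mult.commute)

lemma avg_op_powr_rowsum_times_GE_row:
  assumes K: "\<And>j. j < n \<Longrightarrow> K i j \<ge> 0" and r: "rowsum n K i > 0"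
    and y: "\<And>j. j < n \<Longrightarrow> y j > 0"
  shows "avg_op n K y i powr \<alpha> * rowsum n K i * GE \<alpha> n y (K i)
    = ((\<Sum>j<n. K i j * y j powr \<alpha>) - rowsum n K i * avg_op n K y i powr \<alpha>) / (\<alpha> * (\<alpha> - 1))"
proof -
  define P where "P = rowsum n K i * avg_op n K y i powr \<alpha>"
  have P: "P \<noteq> 0" unfolding P_def using avg_op_pos[of n K i y] K r y by simp
  have GE_row: "GE \<alpha> n y (K i) = ((\<Sum>j<n. K i j * y j powr \<alpha>) / P - 1) / (\<alpha> * (\<alpha> - 1))"
    using GE_closed_form[of n "K i" y \<alpha>] K r y
    by (simp add: P_def l1norm_eq_sum_nonneg wmean_row_eq_avg_op flip: rowsum_def)
  have scale: "P * ((S / P - 1) / c) = (S - P) / c" for S c :: real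
    using P by (simp add: diff_divide_distrib right_diff_distrib)
  have "avg_op n K y i powr \<alpha> * rowsum n K i = P" by (simp add: P_def)
  then show ?thesis unfolding GE_row P_def[symmetric] by (rule ssubst) (rule scale)
qed

lemma wmean_avg_op_rowsum:
  assumes "\<And>j. j < n \<Longrightarrow> (\<Sum>i<n. K i j) = 1" and "\<And>i. i < n \<Longrightarrow> rowsum n K i > 0"
  shows "wmean n (avg_op n K y) (rowsum n K) = (\<Sum>j<n. y j) / real n"
proof -
  have "(\<Sum>i<n. rowsum n K i * avg_op n K y i) = (\<Sum>i<n. \<Sum>j<n. K i j * y j)"
    using assms(2) by (intro sum.cong) (auto simp: avg_op_def dest!: assms(2))
  then show ?thesis
    using assms by (simp add: wmean_def l1norm_eq_sum_nonneg less_imp_le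
        sum_column_stochastic sum_rowsum_column_stochastic)
qed

theorem proposition1:
  fixes \<alpha> :: real and n :: nat and K :: "nat \<Rightarrow> nat \<Rightarrow> real" and y :: "nat \<Rightarrow> real"
  assumes "\<alpha> \<noteq> 0" and "\<alpha> \<noteq> 1"
    and "n \<ge> 1"
    and "\<And>i j. i < n \<Longrightarrow> j < n \<Longrightarrow> K i j \<ge> 0"
    and "\<And>j. j < n \<Longrightarrow> (\<Sum>i<n. K i j) = 1"
    and "\<And>i. i < n \<Longrightarrow> rowsum n K i > 0"
    and "\<And>i. i < n \<Longrightarrow> y i > 0"
  shows "GE1 \<alpha> n y =
    (\<Sum>i<n. (avg_op n K y i powr \<alpha> * rowsum n K i)
              / (((\<Sum>j<n. y j) / real n) powr \<alpha> * real n)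
            * GE \<alpha> n y (\<lambda>j. K i j))
    + GE \<alpha> n (avg_op n K y) (rowsum n K)"
proof -
  define D where "D = ((\<Sum>j<n. y j) / real n) powr \<alpha> * real n * (\<alpha> * (\<alpha> - 1))"
  define R where "R = (\<Sum>i<n. rowsum n K i * avg_op n K y i powr \<alpha>)"
  have "GE1 \<alpha> n y = (\<Sum>j<n. y j powr \<alpha>) / D - 1 / (\<alpha> * (\<alpha> - 1))"
    using assms(3,7) GE_closed_form[of n "\<lambda>_. 1" y \<alpha>]
    by (simp add: GE1_def D_def wmean_def l1norm_def diff_divide_distrib mult.commute)
  moreover have "avg_op n K y i powr \<alpha> * rowsum n K i
      / (((\<Sum>j<n. y j) / real n) powr \<alpha> * real n) * GE \<alpha> n y (K i)
      = (\<Sum>j<n. K i j * y j powr \<alpha>) / D - rowsum n K i * avg_op n K y i powr \<alpha> / D"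
    if "i < n" for i
    using avg_op_powr_rowsum_times_GE_row[of n K i y \<alpha>] assms(4,6,7) that
    by (simp add: D_def diff_divide_distrib mult_ac)
  moreover have "GE \<alpha> n (avg_op n K y) (rowsum n K) = R / D - 1 / (\<alpha> * (\<alpha> - 1))"
    using assms(3-7) avg_op_pos[of n K _ y] GE_closed_form[of n "rowsum n K" "avg_op n K y" \<alpha>]
    by (simp add: l1norm_eq_sum_nonneg less_imp_le wmean_avg_op_rowsum sum_rowsum_column_stochastic
        R_def D_def diff_divide_distrib mult.commute)
  ultimately show ?thesis
    using assms(5)
    by (simp add: sum_subtractf sum_divide_distrib[symmetric] sum_column_stochastic flip: R_def)
qed

end
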